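(* Let $(M,g,J)$ be almost Hermitian of even complex dimension $m=2n\ge2$ with complex spinor bundle $S^cM$ of a spin$^c$ structure. Then the endomorphism $$-\mathbf{i}\gamma(\Omega)+(m+2)(m-1)\pi_{n-1}+m(m+1)\pi_n+(m+1)^2\mathrm{pr}_{\mathcal{V}^\perp}-(m+4)\beta_1^2\pi_{n-2}-(m+2)\beta_2^2\pi_{n+1}-m(m+1)\mathrm{Id}$$ is non-negative definite on $S^cM$.
   Context: $\Omega=g(\cdot,J\cdot)$; $\gamma$ is Clifford multiplication; $S^cM=S_0\oplus\cdots\oplus S_m$ with $S_j$ the eigenbundle of $\gamma(\Omega)$ for eigenvalue $\mathbf{i}(m-2j)$, orthogonal projections $\pi_j$ ($\pi_j=0$ if $j\notin\{0,\dots,m\}$). $\mathcal{V}=S_{n-1}\oplus S_n$, $\mathrm{pr}_{\mathcal{V}^\perp}$ the orthogonal projection onto the complement of $\mathcal{V}$. $\beta_1=m+1-(m+2)\sqrt{\frac{m-1}{m+1}}$, $\beta_2=m+1-m\sqrt{\frac{m+1}{m-1}}$. *)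

theory Defs
  imports "HOL-Analysis.Analysis" "Jordan_Normal_Form.Schur_Decomposition" "Jordan_Normal_Form.Char_Poly"
begin

text \<open>Fibrewise linear algebra of the spinor bundle: a fibre is modelled as
  complex column vectors of length N, endomorphisms as N x N complex matrices,
  the Hermitian product as  v \<bullet>c w  (linear in v, antilinear in w).\<close>

definition beta1 :: "nat \<Rightarrow> real" where
  "beta1 m = real m + 1 - (real m + 2) * sqrt ((real m - 1) / (real m + 1))"

definition beta2 :: "nat \<Rightarrow> real" where
  "beta2 m = real m + 1 - real m * sqrt ((real m + 1) / (real m - 1))"

definition eigsp :: "complex mat \<Rightarrow> complex \<Rightarrow> complex vec set" where
  "eigsp G c = {v \<in> carrier_vec (dim_row G). G *\<^sub>v v = c \<cdot>\<^sub>v v}"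

definition is_orth_proj :: "nat \<Rightarrow> complex mat \<Rightarrow> complex vec set \<Rightarrow> bool" where
  "is_orth_proj N P W \<longleftrightarrow> P \<in> carrier_mat N N \<and> P * P = P \<and> mat_adjoint P = P
     \<and> (\<lambda>w. P *\<^sub>v w) ` carrier_vec N = W"

definition orth_compl :: "nat \<Rightarrow> complex vec set \<Rightarrow> complex vec set" where
  "orth_compl N W = {v \<in> carrier_vec N. \<forall>w\<in>W. v \<bullet>c w = 0}"

end

theory Submission
  imports Defs
begin

(* Since G is skew-adjoint, eigenvectors of G for different eigenvalues are orthogonal, so each
   P j commutes with G and the P j are mutually orthogonal; hence L = sum_j P j is an idempotent
   commuting with G that fixes every eigenvector.  Such an L is the identity: in a Schur
   triangularisation G S = S B, the first nonzero column of (1 - L) S would be an eigenvector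
   of G annihilated by L.  Every summand of T acts on the eigenspace S_j by a real scalar t_j,
   so T = sum_j t_j P j and <T psi, psi> = sum_j t_j |P j psi|^2.  Finally t_(n-1) = t_n = 0,
   t_(n-2) = m + 5 - (m + 4) beta1^2, t_(n+1) = m - 1 - (m + 2) beta2^2 and t_j = 2m + 1 - 2j
   otherwise, all non-negative because beta1^2 <= 1 and 4 beta2^2 <= 1 for m >= 2. *)

lemma smult_mat_mult_vec:
  fixes A :: "'a::comm_ring mat"
  assumes "A \<in> carrier_mat nr nc" "v \<in> carrier_vec nc"
  shows "(k \<cdot>\<^sub>m A) *\<^sub>v v = k \<cdot>\<^sub>v (A *\<^sub>v v)"
  using assms by (intro eq_vecI) (auto simp: scalar_prod_def sum_distrib_left mult.assoc)

lemma eq_matI_mult_vec: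
  fixes A B :: "'a::semiring_1 mat"
  assumes "A \<in> carrier_mat nr nc" "B \<in> carrier_mat nr nc"
    and "\<And>v. v \<in> carrier_vec nc \<Longrightarrow> A *\<^sub>v v = B *\<^sub>v v"
  shows "A = B"
proof (rule eq_matI)
  fix i j assume i: "i < dim_row B" and j: "j < dim_col B"
  have "(A *\<^sub>v unit_vec nc j) $ i = (B *\<^sub>v unit_vec nc j) $ i"
    using assms(3)[of "unit_vec nc j"] by simp
  then show "A $$ (i, j) = B $$ (i, j)" using assms(1,2) i j by simp
qed (use assms in auto)

lemma eq_mat_if_minus_eq_zero:
  fixes A B :: "'a::ab_group_add mat"
  assumes "A \<in> carrier_mat nr nc" "B \<in> carrier_mat nr nc" "A - B = 0\<^sub>m nr nc"
  shows "A = B"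
proof (rule eq_matI)
  fix i j assume "i < dim_row B" "j < dim_col B"
  then have "A $$ (i, j) - B $$ (i, j) = (A - B) $$ (i, j)" by simp
  then show "A $$ (i, j) = B $$ (i, j)" using assms \<open>i < dim_row B\<close> \<open>j < dim_col B\<close> by simp
qed (use assms in auto)

lemma eq_vecI_conj_sprod:
  fixes x y :: "complex vec"
  assumes x: "x \<in> carrier_vec N" and y: "y \<in> carrier_vec N"
    and xy: "\<And>w. w \<in> carrier_vec N \<Longrightarrow> x \<bullet>c w = y \<bullet>c w"
  shows "x = y"
proof -
  have "(x - y) \<bullet>c (x - y) = x \<bullet>c (x - y) - y \<bullet>c (x - y)"
    using x y by (simp add: minus_scalar_prod_distrib)
  also have "\<dots> = 0" using xy[of "x - y"] x y by simp
  finally have "x - y = 0\<^sub>v N"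
    using conjugate_square_eq_0_vec[of "x - y" N] x y by simp
  then have "\<And>i. i < N \<Longrightarrow> x $ i = y $ i"
    using x y by (metis carrier_vecD index_minus_vec(1) index_zero_vec(1) right_minus_eq)
  then show ?thesis using x y by (intro eq_vecI) auto
qed

lemma conj_sprod_eq_0_commute:
  fixes v w :: "complex vec"
  assumes "v \<in> carrier_vec N" "w \<in> carrier_vec N" "v \<bullet>c w = 0"
  shows "w \<bullet>c v = 0"
  using assms conjugate_conjugate_sprod[of v N w] conjugate_vec_sprod_comm[of w N v] by simp

lemma mat_adjoint_carrier [simp]: "A \<in> carrier_mat N N \<Longrightarrow> mat_adjoint A \<in> carrier_mat N N"
  unfolding mat_adjoint_def by (auto simp: mat_of_rows_def)

lemma mat_adjoint_index:
  fixes A :: "complex mat"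
  assumes "A \<in> carrier_mat N N" "i < N" "j < N"
  shows "mat_adjoint A $$ (i, j) = cnj (A $$ (j, i))"
  using assms unfolding mat_adjoint_def by (auto simp: mat_of_rows_def)

lemma mat_adjoint_conj_sprod:
  fixes A :: "complex mat"
  assumes A: "A \<in> carrier_mat N N" and v: "v \<in> carrier_vec N" and w: "w \<in> carrier_vec N"
  shows "(A *\<^sub>v v) \<bullet>c w = v \<bullet>c (mat_adjoint A *\<^sub>v w)"
proof -
  have "(A *\<^sub>v v) \<bullet>c w = (\<Sum>i<N. \<Sum>k<N. A $$ (i, k) * v $ k * cnj (w $ i))"
    using A v w by (simp add: scalar_prod_def row_def lessThan_atLeast0 sum_distrib_right)
  also have "\<dots> = (\<Sum>k<N. \<Sum>i<N. A $$ (i, k) * v $ k * cnj (w $ i))"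
    by (rule sum.swap)
  also have "\<dots> = (\<Sum>k<N. v $ k * cnj (\<Sum>i<N. mat_adjoint A $$ (k, i) * w $ i))"
    using A by (auto simp: mat_adjoint_index sum_distrib_left mult_ac intro!: sum.cong)
  also have "\<dots> = v \<bullet>c (mat_adjoint A *\<^sub>v w)"
    using mat_adjoint_carrier[OF A] v w
    by (simp add: scalar_prod_def row_def lessThan_atLeast0)
  finally show ?thesis .
qed

lemma conj_sprod_uminus_smult_imag:
  fixes x y :: "complex vec"
  assumes "x \<in> carrier_vec N" "y \<in> carrier_vec N" "cnj c = - c"
  shows "x \<bullet>c (- (c \<cdot>\<^sub>v y)) = c * (x \<bullet>c y)"
proof -
  have "- (c \<cdot>\<^sub>v y) = (- c) \<cdot>\<^sub>v y" by auto
  then show ?thesis using assms by (simp add: conjugate_smult_vec)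
qed

lemma is_orth_proj_carrier: "is_orth_proj N P W \<Longrightarrow> P \<in> carrier_mat N N"
  unfolding is_orth_proj_def by auto

lemma is_orth_proj_range: "is_orth_proj N P W \<Longrightarrow> v \<in> carrier_vec N \<Longrightarrow> P *\<^sub>v v \<in> W"
  unfolding is_orth_proj_def by auto

lemma is_orth_proj_fixes:
  fixes P :: "complex mat"
  assumes "is_orth_proj N P W" and "u \<in> W"
  shows "P *\<^sub>v u = u"
proof -
  from assms obtain w where w: "w \<in> carrier_vec N" and u: "u = P *\<^sub>v w"
    and PN: "P \<in> carrier_mat N N" and PP: "P * P = P"
    unfolding is_orth_proj_def by auto
  have "P *\<^sub>v u = (P * P) *\<^sub>v w" using PN w u by simp
  then show ?thesis using PP u by simp
qed

lemma is_orth_proj_conj_sprod_self: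
  fixes P :: "complex mat"
  assumes P: "is_orth_proj N P W" and v: "v \<in> carrier_vec N"
  shows "(P *\<^sub>v v) \<bullet>c v = (P *\<^sub>v v) \<bullet>c (P *\<^sub>v v)"
proof -
  have PN: "P \<in> carrier_mat N N" and "mat_adjoint P = P"
    using P unfolding is_orth_proj_def by auto
  then have "(P *\<^sub>v (P *\<^sub>v v)) \<bullet>c v = (P *\<^sub>v v) \<bullet>c (P *\<^sub>v v)"
    using mat_adjoint_conj_sprod[OF PN _ v, of "P *\<^sub>v v"] v by simp
  then show ?thesis using is_orth_proj_fixes[OF P is_orth_proj_range[OF P v]] by simp
qed

lemma is_orth_proj_orth_compl:
  fixes P :: "complex mat"
  assumes P: "is_orth_proj N P W" and v: "v \<in> orth_compl N W"
  shows "P *\<^sub>v v = 0\<^sub>v N"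
proof -
  have vN: "v \<in> carrier_vec N" using v unfolding orth_compl_def by simp
  have PvN: "P *\<^sub>v v \<in> carrier_vec N" using is_orth_proj_carrier[OF P] vN by simp
  have "v \<bullet>c (P *\<^sub>v v) = 0" using v is_orth_proj_range[OF P vN] unfolding orth_compl_def by simp
  then have "(P *\<^sub>v v) \<bullet>c (P *\<^sub>v v) = 0"
    using is_orth_proj_conj_sprod_self[OF P vN] conj_sprod_eq_0_commute[OF vN PvN] by simp
  then show ?thesis using PvN by simp
qed

lemma subset_orth_compl_orth_compl:
  fixes V :: "complex vec set"
  assumes "V \<subseteq> carrier_vec N"
  shows "V \<subseteq> orth_compl N (orth_compl N V)"
  using assms conj_sprod_eq_0_commute unfolding orth_compl_def by blast

section \<open>Eigenspaces of a skew-adjoint matrix\<close>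

lemma eigsp_carrier: "G \<in> carrier_mat N N \<Longrightarrow> eigsp G c \<subseteq> carrier_vec N"
  unfolding eigsp_def by auto

lemma zero_in_eigsp: "G \<in> carrier_mat N N \<Longrightarrow> 0\<^sub>v N \<in> eigsp (G :: complex mat) c"
  unfolding eigsp_def by auto

lemma skew_adjoint_eigsp_orth:
  fixes G :: "complex mat"
  assumes G: "G \<in> carrier_mat N N" and skew: "mat_adjoint G = - G"
    and "a \<noteq> b" and "cnj b = - b"
  shows "eigsp G a \<subseteq> orth_compl N (eigsp G b)"
proof (unfold orth_compl_def, intro subsetI CollectI conjI ballI)
  fix x assume "x \<in> eigsp G a"
  then show "x \<in> carrier_vec N" using eigsp_carrier[OF G] by blast
next
  fix x y assume x: "x \<in> eigsp G a" and y: "y \<in> eigsp G b"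
  have xN: "x \<in> carrier_vec N" and Gx: "G *\<^sub>v x = a \<cdot>\<^sub>v x"
    and yN: "y \<in> carrier_vec N" and Gy: "G *\<^sub>v y = b \<cdot>\<^sub>v y"
    using x y G unfolding eigsp_def by auto
  have "a * (x \<bullet>c y) = (G *\<^sub>v x) \<bullet>c y" using Gx xN yN by simp
  also have "\<dots> = x \<bullet>c (- (G *\<^sub>v y))"
    using mat_adjoint_conj_sprod[OF G xN yN] skew uminus_mult_mat_vec[of y G] G yN by simp
  also have "\<dots> = b * (x \<bullet>c y)"
    using conj_sprod_uminus_smult_imag[OF xN yN \<open>cnj b = - b\<close>] Gy by simp
  finally show "x \<bullet>c y = 0" using \<open>a \<noteq> b\<close> by simp
qed

lemma orth_proj_eigsp_mult_eigvec:
  fixes G P :: "complex mat"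
  assumes G: "G \<in> carrier_mat N N" and skew: "mat_adjoint G = - G" and "cnj a = - a"
    and P: "is_orth_proj N P (eigsp G a)" and u: "u \<in> eigsp G b"
  shows "P *\<^sub>v u = (if a = b then u else 0\<^sub>v N)"
proof (cases "a = b")
  case False
  then have "u \<in> orth_compl N (eigsp G a)"
    using skew_adjoint_eigsp_orth[OF G skew _ \<open>cnj a = - a\<close>, of b] u by auto
  then show ?thesis using is_orth_proj_orth_compl[OF P] False by simp
qed (use is_orth_proj_fixes[OF P] u in simp)

lemma orth_proj_eigsp_commute:
  fixes G P :: "complex mat"
  assumes G: "G \<in> carrier_mat N N" and skew: "mat_adjoint G = - G" and c: "cnj c = - c"
    and P: "is_orth_proj N P (eigsp G c)"
  shows "G * P = P * G"
proof (rule eq_matI_mult_vec)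
  have PN: "P \<in> carrier_mat N N" and P_adj: "mat_adjoint P = P"
    using P unfolding is_orth_proj_def by auto
  show "G * P \<in> carrier_mat N N" "P * G \<in> carrier_mat N N" using G PN by auto
  have GP: "G *\<^sub>v (P *\<^sub>v v) = c \<cdot>\<^sub>v (P *\<^sub>v v)" if "v \<in> carrier_vec N" for v
    using is_orth_proj_range[OF P that] unfolding eigsp_def by simp
  fix v :: "complex vec" assume v: "v \<in> carrier_vec N"
  have "P *\<^sub>v (G *\<^sub>v v) = c \<cdot>\<^sub>v (P *\<^sub>v v)"
  proof (rule eq_vecI_conj_sprod)
    fix w :: "complex vec" assume w: "w \<in> carrier_vec N"
    have PwN: "P *\<^sub>v w \<in> carrier_vec N" using PN w by simp
    have "(P *\<^sub>v (G *\<^sub>v v)) \<bullet>c w = (G *\<^sub>v v) \<bullet>c (P *\<^sub>v w)"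
      using mat_adjoint_conj_sprod[OF PN _ w, of "G *\<^sub>v v"] P_adj G v by simp
    also have "\<dots> = v \<bullet>c (- (G *\<^sub>v (P *\<^sub>v w)))"
      using mat_adjoint_conj_sprod[OF G v PwN] skew uminus_mult_mat_vec[of "P *\<^sub>v w" G] G PN PwN
      by simp
    also have "\<dots> = c * (v \<bullet>c (P *\<^sub>v w))"
      using conj_sprod_uminus_smult_imag[OF v PwN c] GP[OF w] by simp
    also have "v \<bullet>c (P *\<^sub>v w) = (P *\<^sub>v v) \<bullet>c w"
      using mat_adjoint_conj_sprod[OF PN v w] P_adj by simp
    finally show "(P *\<^sub>v (G *\<^sub>v v)) \<bullet>c w = (c \<cdot>\<^sub>v (P *\<^sub>v v)) \<bullet>c w"
      using PN v w by simp
  qed (use G PN v in auto)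
  then show "(G * P) *\<^sub>v v = (P * G) *\<^sub>v v" using GP[OF v] G PN v by simp
qed

definition mat_sum :: "nat \<Rightarrow> ('i \<Rightarrow> 'a::comm_semiring_0 mat) \<Rightarrow> 'i set \<Rightarrow> 'a mat" where
  "mat_sum N f J = mat N N (\<lambda>(r, c). \<Sum>j\<in>J. f j $$ (r, c))"

lemma mat_sum_carrier [simp]: "mat_sum N f J \<in> carrier_mat N N"
  unfolding mat_sum_def by simp

lemma mat_sum_cong: "(\<And>j. j \<in> J \<Longrightarrow> f j = g j) \<Longrightarrow> mat_sum N f J = mat_sum N g J"
  unfolding mat_sum_def by (auto intro!: sum.cong)

lemma mat_sum_mult_vec:
  assumes f: "\<And>j. j \<in> J \<Longrightarrow> f j \<in> carrier_mat N N" and v: "v \<in> carrier_vec N"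
  shows "mat_sum N f J *\<^sub>v v = vec N (\<lambda>r. \<Sum>j\<in>J. (f j *\<^sub>v v) $ r)"
proof (rule eq_vecI)
  fix r assume "r < dim_vec (vec N (\<lambda>r. \<Sum>j\<in>J. (f j *\<^sub>v v) $ r))"
  then have r: "r < N" by simp
  have "(f j *\<^sub>v v) $ r = (\<Sum>i = 0..<N. f j $$ (r, i) * v $ i)" if "j \<in> J" for j
    using f[OF that] v r by (simp add: scalar_prod_def)
  then show "(mat_sum N f J *\<^sub>v v) $ r = vec N (\<lambda>r. \<Sum>j\<in>J. (f j *\<^sub>v v) $ r) $ r"
    using r v unfolding mat_sum_def
    by (simp add: scalar_prod_def sum_distrib_right sum.swap[of _ J])
qed (simp add: mat_sum_def)

lemma conj_sprod_mat_sum: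
  fixes f :: "'i \<Rightarrow> complex mat"
  assumes f: "\<And>j. j \<in> J \<Longrightarrow> f j \<in> carrier_mat N N" and v: "v \<in> carrier_vec N"
    and w: "w \<in> carrier_vec N"
  shows "(mat_sum N f J *\<^sub>v v) \<bullet>c w = (\<Sum>j\<in>J. (f j *\<^sub>v v) \<bullet>c w)"
proof -
  have "(f j *\<^sub>v v) \<bullet>c w = (\<Sum>r = 0..<N. (f j *\<^sub>v v) $ r * cnj (w $ r))" if "j \<in> J" for j
    using f[OF that] w by (simp add: scalar_prod_def)
  then show ?thesis
    using w by (simp add: mat_sum_mult_vec[OF f v] scalar_prod_def sum_distrib_right sum.swap[of _ J])
qed

lemma mult_mat_sum:
  fixes A :: "'a::comm_semiring_0 mat"
  assumes A: "A \<in> carrier_mat N N" and f: "\<And>j. j \<in> J \<Longrightarrow> f j \<in> carrier_mat N N"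
  shows "A * mat_sum N f J = mat_sum N (\<lambda>j. A * f j) J"
proof (rule eq_matI)
  fix r c assume "r < dim_row (mat_sum N (\<lambda>j. A * f j) J)" "c < dim_col (mat_sum N (\<lambda>j. A * f j) J)"
  then have rc: "r < N" "c < N" by (auto simp: mat_sum_def)
  have "(A * f j) $$ (r, c) = (\<Sum>k = 0..<N. A $$ (r, k) * f j $$ (k, c))" if "j \<in> J" for j
    using A f[OF that] rc by (simp add: scalar_prod_def)
  then show "(A * mat_sum N f J) $$ (r, c) = mat_sum N (\<lambda>j. A * f j) J $$ (r, c)"
    using A rc unfolding mat_sum_def by (simp add: scalar_prod_def sum_distrib_left sum.swap[of _ J])
qed (use A in \<open>auto simp: mat_sum_def\<close>)

lemma mat_sum_mult:
  fixes A :: "'a::comm_semiring_0 mat"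
  assumes A: "A \<in> carrier_mat N N" and f: "\<And>j. j \<in> J \<Longrightarrow> f j \<in> carrier_mat N N"
  shows "mat_sum N f J * A = mat_sum N (\<lambda>j. f j * A) J"
proof (rule eq_matI)
  fix r c assume "r < dim_row (mat_sum N (\<lambda>j. f j * A) J)" "c < dim_col (mat_sum N (\<lambda>j. f j * A) J)"
  then have rc: "r < N" "c < N" by (auto simp: mat_sum_def)
  have "(f j * A) $$ (r, c) = (\<Sum>k = 0..<N. f j $$ (r, k) * A $$ (k, c))" if "j \<in> J" for j
    using A f[OF that] rc by (simp add: scalar_prod_def)
  then show "(mat_sum N f J * A) $$ (r, c) = mat_sum N (\<lambda>j. f j * A) J $$ (r, c)"
    using A rc unfolding mat_sum_def by (simp add: scalar_prod_def sum_distrib_right sum.swap[of _ J])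
qed (use A in \<open>auto simp: mat_sum_def\<close>)

section \<open>Spectral resolution of a skew-adjoint matrix\<close>

lemma upper_triangular_intertwiner_col:
  fixes G Z B :: "'a::comm_ring_1 mat"
  assumes G: "G \<in> carrier_mat N N" and Z: "Z \<in> carrier_mat N N" and B: "B \<in> carrier_mat N N"
    and ut: "upper_triangular B" and GZ: "G * Z = Z * B"
    and k: "k < N" and prev: "\<forall>i<k. col Z i = 0\<^sub>v N"
  shows "G *\<^sub>v col Z k = B $$ (k, k) \<cdot>\<^sub>v col Z k"
proof -
  have "G *\<^sub>v col Z k = Z *\<^sub>v col B k"
    using col_mult2[OF G Z k] col_mult2[OF Z B k] GZ by simp
  also have "\<dots> = B $$ (k, k) \<cdot>\<^sub>v col Z k"
  proof (rule eq_vecI)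
    fix r assume "r < dim_vec (B $$ (k, k) \<cdot>\<^sub>v col Z k)"
    then have r: "r < N" using Z k by simp
    have Z_before: "Z $$ (r, i) = 0" if "i < k" for i
    proof -
      have "Z $$ (r, i) = col Z i $ r" using Z r that k by simp
      also have "\<dots> = 0" using prev that r by simp
      finally show ?thesis .
    qed
    have B_below: "B $$ (i, k) = 0" if "k < i" "i < N" for i
      using upper_triangularD[OF ut that(1)] B that(2) by simp
    have "(Z *\<^sub>v col B k) $ r = (\<Sum>i = 0..<N. Z $$ (r, i) * B $$ (i, k))"
      using r Z B k by (simp add: scalar_prod_def)
    also have "\<dots> = (\<Sum>i = 0..<N. if i = k then Z $$ (r, k) * B $$ (k, k) else 0)"
    proof (rule sum.cong[OF refl])
      fix i assume "i \<in> {0..<N}"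
      then show "Z $$ (r, i) * B $$ (i, k) = (if i = k then Z $$ (r, k) * B $$ (k, k) else 0)"
        using Z_before B_below by (cases i k rule: linorder_cases) auto
    qed
    also have "\<dots> = (B $$ (k, k) \<cdot>\<^sub>v col Z k) $ r" using r Z k by simp
    finally show "(Z *\<^sub>v col B k) $ r = (B $$ (k, k) \<cdot>\<^sub>v col Z k) $ r" .
  qed (use Z B k in simp)
  finally show ?thesis .
qed

lemma upper_triangular_intertwiner_eq_zero:
  fixes G Z B :: "'a::comm_ring_1 mat"
  assumes G: "G \<in> carrier_mat N N" and Z: "Z \<in> carrier_mat N N" and B: "B \<in> carrier_mat N N"
    and ut: "upper_triangular B" and GZ: "G * Z = Z * B"
    and no_eigenvector: "\<And>k c. k < N \<Longrightarrow> \<not> eigenvector G (col Z k) c"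
  shows "Z = 0\<^sub>m N N"
proof -
  have cols: "\<forall>k<N. col Z k = 0\<^sub>v N"
  proof (rule ccontr)
    assume "\<not> (\<forall>k<N. col Z k = 0\<^sub>v N)"
    then have ex: "\<exists>k. k < N \<and> col Z k \<noteq> 0\<^sub>v N" by auto
    define k where "k = (LEAST k. k < N \<and> col Z k \<noteq> 0\<^sub>v N)"
    have k: "k < N" "col Z k \<noteq> 0\<^sub>v N"
      using LeastI_ex[OF ex] unfolding k_def by auto
    have prev: "\<forall>i<k. col Z i = 0\<^sub>v N"
    proof (intro allI impI)
      fix i assume "i < k"
      then have "\<not> (i < N \<and> col Z i \<noteq> 0\<^sub>v N)" unfolding k_def by (rule not_less_Least)
      then show "col Z i = 0\<^sub>v N" using \<open>i < k\<close> k(1) by simp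
    qed
    have "col Z k \<in> carrier_vec N" using Z k(1) by simp
    then have "eigenvector G (col Z k) (B $$ (k, k))"
      using upper_triangular_intertwiner_col[OF G Z B ut GZ k(1) prev] k(2) G
      unfolding eigenvector_def by (simp add: carrier_matD)
    then show False using no_eigenvector[OF k(1)] by blast
  qed
  show ?thesis
  proof (rule eq_matI)
    fix i j assume "i < dim_row (0\<^sub>m N N :: 'a mat)" "j < dim_col (0\<^sub>m N N :: 'a mat)"
    then have ij: "i < N" "j < N" by auto
    have "Z $$ (i, j) = col Z j $ i" using Z ij by simp
    also have "\<dots> = 0" using cols ij by simp
    finally show "Z $$ (i, j) = 0\<^sub>m N N $$ (i, j)" using ij by simp
  qed (use Z in auto)
qed

lemma idempotent_commuting_fixing_eigenvectors_eq_one: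
  fixes G L :: "complex mat"
  assumes G: "G \<in> carrier_mat N N" and L: "L \<in> carrier_mat N N"
    and LL: "L * L = L" and LG: "L * G = G * L"
    and fixes_eigenvectors: "\<And>v c. eigenvector G v c \<Longrightarrow> L *\<^sub>v v = v"
  shows "L = 1\<^sub>m N"
proof -
  obtain es where "char_poly G = (\<Prod>a\<leftarrow>es. [:- a, 1:])"
    using char_poly_factorized[OF G] by blast
  moreover obtain B S S' where "schur_decomposition G es = (B, S, S')"
    by (cases "schur_decomposition G es") auto
  ultimately have sim: "similar_mat_wit G B S S'" and ut: "upper_triangular B"
    using schur_decomposition[OF G] by auto
  have B: "B \<in> carrier_mat N N" and S: "S \<in> carrier_mat N N" and S': "S' \<in> carrier_mat N N"
    and SS': "S * S' = 1\<^sub>m N" and S'S: "S' * S = 1\<^sub>m N" and G_eq: "G = S * B * S'"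
    using similar_mat_witD2[OF G sim] by auto
  have GS: "G * S = S * B"
    using G_eq S'S B S S' by (simp add: assoc_mult_mat[of _ N N _ N _ N])
  have LS_carrier: "L * S \<in> carrier_mat N N" using L S by simp
  then have Z: "S - L * S \<in> carrier_mat N N" by (rule minus_carrier_mat)
  have Z_zero: "S - L * S = 0\<^sub>m N N"
  proof (rule upper_triangular_intertwiner_eq_zero[OF G Z B ut])
    have "G * (L * S) = L * S * B"
      using assoc_mult_mat[OF G L S] assoc_mult_mat[OF L G S] assoc_mult_mat[OF L S B] LG GS by simp
    then have "G * (S - L * S) = S * B - L * S * B"
      using mult_minus_distrib_mat[OF G S LS_carrier] GS by simp
    also have "\<dots> = (S - L * S) * B" by (rule minus_mult_distrib_mat[OF S LS_carrier B, symmetric])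
    finally show "G * (S - L * S) = (S - L * S) * B" .
    have "L * (S - L * S) = L * S - L * (L * S)" by (rule mult_minus_distrib_mat[OF L S LS_carrier])
    also have "L * (L * S) = L * S" using assoc_mult_mat[OF L L S] LL by simp
    finally have L_kills: "L * (S - L * S) = 0\<^sub>m N N" using LS_carrier by simp
    show "\<not> eigenvector G (col (S - L * S) k) c" if "k < N" for k c
    proof
      assume "eigenvector G (col (S - L * S) k) c"
      then have "L *\<^sub>v col (S - L * S) k = col (S - L * S) k" by (rule fixes_eigenvectors)
      moreover have "L *\<^sub>v col (S - L * S) k = 0\<^sub>v N"
        using col_mult2[OF L Z that] L_kills that by simp
      ultimately show False using \<open>eigenvector G (col (S - L * S) k) c\<close> G
        unfolding eigenvector_def by (simp add: carrier_matD)
    qed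
  qed
  have LS: "L * S = S" using eq_mat_if_minus_eq_zero[OF S LS_carrier Z_zero] by simp
  have "L = L * (S * S')" using SS' L by simp
  also have "\<dots> = L * S * S'" using assoc_mult_mat[OF L S S'] by simp
  also have "\<dots> = 1\<^sub>m N" using LS SS' by simp
  finally show ?thesis .
qed

locale skew_adjoint_eigenprojections =
  fixes N :: nat and G :: "complex mat" and J :: "'i set"
    and ev :: "'i \<Rightarrow> complex" and P :: "'i \<Rightarrow> complex mat"
  assumes G_carrier: "G \<in> carrier_mat N N" and skew: "mat_adjoint G = - G"
    and finite_J: "finite J" and inj_ev: "inj_on ev J"
    and ev_imag: "\<And>j. j \<in> J \<Longrightarrow> cnj (ev j) = - ev j"
    and spectrum: "\<And>c. eigenvalue G c \<Longrightarrow> c \<in> ev ` J"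
    and proj: "\<And>j. j \<in> J \<Longrightarrow> is_orth_proj N (P j) (eigsp G (ev j))"
begin

lemma P_carrier: "j \<in> J \<Longrightarrow> P j \<in> carrier_mat N N"
  using proj is_orth_proj_carrier by blast

lemma P_mult_eigvec:
  assumes "i \<in> J" "j \<in> J" "u \<in> eigsp G (ev j)"
  shows "P i *\<^sub>v u = (if i = j then u else 0\<^sub>v N)"
  using orth_proj_eigsp_mult_eigvec[OF G_carrier skew ev_imag proj, OF assms(1,1,3)]
    inj_onD[OF inj_ev _ assms(1,2)] by auto

lemma eigenvector_in_eigsp:
  assumes "eigenvector G v c"
  obtains j where "j \<in> J" "v \<in> eigsp G (ev j)"
proof -
  obtain j where "j \<in> J" "c = ev j"
    using spectrum[of c] assms unfolding eigenvalue_def by blast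
  then show ?thesis
    using that assms G_carrier unfolding eigenvector_def eigsp_def by auto
qed

lemma sum_P_eq_one: "mat_sum N P J = 1\<^sub>m N"
proof (rule idempotent_commuting_fixing_eigenvectors_eq_one[OF G_carrier mat_sum_carrier])
  let ?L = "mat_sum N P J"
  have L_fixes: "?L *\<^sub>v u = u" if j: "j \<in> J" and u: "u \<in> eigsp G (ev j)" for j u
  proof -
    have uN: "u \<in> carrier_vec N" using u eigsp_carrier[OF G_carrier] by blast
    have "?L *\<^sub>v u = vec N (\<lambda>r. \<Sum>i\<in>J. (if i = j then u else 0\<^sub>v N) $ r)"
      using mat_sum_mult_vec[where f = P, OF P_carrier uN] P_mult_eigvec[OF _ j u] by simp
    also have "\<dots> = u"
      using uN by (intro eq_vecI) (auto simp: sum.remove[OF finite_J j])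
    finally show ?thesis .
  qed
  have L_P: "?L * P j = P j" if "j \<in> J" for j
  proof (rule eq_matI_mult_vec)
    fix v :: "complex vec" assume v: "v \<in> carrier_vec N"
    have "P j *\<^sub>v v \<in> eigsp G (ev j)" using is_orth_proj_range[OF proj[OF that] v] .
    then show "(?L * P j) *\<^sub>v v = P j *\<^sub>v v"
      using L_fixes[OF that] assoc_mult_mat_vec[OF mat_sum_carrier[of N P J] P_carrier[OF that] v] by simp
  qed (use mult_carrier_mat[OF mat_sum_carrier P_carrier[OF that]] P_carrier[OF that] in auto)
  have "?L * ?L = mat_sum N (\<lambda>j. ?L * P j) J" by (rule mult_mat_sum[OF mat_sum_carrier P_carrier])
  also have "\<dots> = ?L" using L_P by (rule mat_sum_cong)
  finally show "?L * ?L = ?L" .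
  have "?L * G = mat_sum N (\<lambda>j. P j * G) J" by (rule mat_sum_mult[where f = P, OF G_carrier P_carrier])
  also have "\<dots> = mat_sum N (\<lambda>j. G * P j) J"
    using orth_proj_eigsp_commute[OF G_carrier skew ev_imag proj] by (simp cong: mat_sum_cong)
  also have "\<dots> = G * ?L" by (rule mult_mat_sum[where f = P, OF G_carrier P_carrier, symmetric])
  finally show "?L * G = G * ?L" .
  show "?L *\<^sub>v v = v" if "eigenvector G v c" for v c
    using eigenvector_in_eigsp[OF that] L_fixes by metis
qed

lemma conj_sprod_nonneg:
  fixes T :: "complex mat" and t :: "'i \<Rightarrow> complex"
  assumes T: "T \<in> carrier_mat N N"
    and T_eig: "\<And>j u. j \<in> J \<Longrightarrow> u \<in> eigsp G (ev j) \<Longrightarrow> T *\<^sub>v u = t j \<cdot>\<^sub>v u"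
    and t_nonneg: "\<And>j. j \<in> J \<Longrightarrow> 0 \<le> t j"
    and \<psi>: "\<psi> \<in> carrier_vec N"
  shows "0 \<le> (T *\<^sub>v \<psi>) \<bullet>c \<psi>"
proof -
  have T_P: "T * P j = t j \<cdot>\<^sub>m P j" if "j \<in> J" for j
  proof (rule eq_matI_mult_vec)
    fix v :: "complex vec" assume v: "v \<in> carrier_vec N"
    have "P j *\<^sub>v v \<in> eigsp G (ev j)" using is_orth_proj_range[OF proj[OF that] v] .
    then show "(T * P j) *\<^sub>v v = (t j \<cdot>\<^sub>m P j) *\<^sub>v v"
      using T_eig[OF that] T P_carrier[OF that] v by (simp add: smult_mat_mult_vec)
  qed (use T P_carrier[OF that] in auto)
  have "T = T * mat_sum N P J" using sum_P_eq_one T by simp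
  also have "\<dots> = mat_sum N (\<lambda>j. t j \<cdot>\<^sub>m P j) J"
    using mult_mat_sum[where f = P, OF T P_carrier] T_P by (simp cong: mat_sum_cong)
  finally have "(T *\<^sub>v \<psi>) \<bullet>c \<psi> = (\<Sum>j\<in>J. ((t j \<cdot>\<^sub>m P j) *\<^sub>v \<psi>) \<bullet>c \<psi>)"
    using conj_sprod_mat_sum[of J "\<lambda>j. t j \<cdot>\<^sub>m P j"] P_carrier \<psi> by simp
  also have "\<dots> = (\<Sum>j\<in>J. t j * ((P j *\<^sub>v \<psi>) \<bullet>c (P j *\<^sub>v \<psi>)))"
  proof (rule sum.cong[OF refl])
    fix j assume j: "j \<in> J"
    have "((t j \<cdot>\<^sub>m P j) *\<^sub>v \<psi>) \<bullet>c \<psi> = t j * ((P j *\<^sub>v \<psi>) \<bullet>c \<psi>)"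
      using smult_mat_mult_vec[OF P_carrier[OF j] \<psi>] P_carrier[OF j] \<psi> by simp
    then show "((t j \<cdot>\<^sub>m P j) *\<^sub>v \<psi>) \<bullet>c \<psi> = t j * ((P j *\<^sub>v \<psi>) \<bullet>c (P j *\<^sub>v \<psi>))"
      using is_orth_proj_conj_sprod_self[OF proj[OF j] \<psi>] by simp
  qed
  also have "\<dots> \<ge> 0"
    using t_nonneg by (intro sum_nonneg mult_nonneg_nonneg conjugate_square_ge_0_vec)
  finally show ?thesis .
qed

end

section \<open>The endomorphism of the theorem\<close>

lemma beta1_sq_le:
  assumes m: "m \<ge> 2"
  shows "(beta1 m)^2 \<le> 1"
proof -
  define x where "x = real m"
  have x: "x \<ge> 2" using m unfolding x_def by simp
  define s where "s = sqrt ((x - 1) / (x + 1))"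
  have s_le_1: "s \<le> 1" unfolding s_def using x by simp
  have s_lower_sq: "(x / (x + 2))^2 \<le> (x - 1) / (x + 1)"
  proof -
    have "x^2 * (x + 1) \<le> (x - 1) * (x + 2)^2"
    proof -
      have "(x - 1) * (x + 2)^2 - x^2 * (x + 1) = 2 * (x * x) - 4"
        by (simp add: power2_eq_square algebra_simps)
      moreover have "x * x \<ge> 2 * 2" using x by (intro mult_mono) auto
      ultimately show ?thesis by linarith
    qed
    thus ?thesis using x by (simp add: power_divide field_simps)
  qed
  have s_lower: "x / (x + 2) \<le> s" unfolding s_def using s_lower_sq x by (intro real_le_rsqrt) auto
  have "x \<le> (x + 2) * s" using s_lower x by (simp add: field_simps)
  moreover have "(x + 2) * s \<le> x + 2" using s_le_1 x by simp
  ultimately have "\<bar>beta1 m\<bar> \<le> 1" unfolding beta1_def x_def[symmetric] s_def[symmetric] by linarith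
  thus ?thesis by (simp add: abs_square_le_1)
qed

lemma beta2_sq_le:
  assumes m: "m \<ge> 2"
  shows "4 * (beta2 m)^2 \<le> 1"
proof -
  define x where "x = real m"
  have x: "x \<ge> 2" using m unfolding x_def by simp
  define r where "r = sqrt ((x + 1) / (x - 1))"
  have r_lower_sq: "((x + 1) / x)^2 \<le> (x + 1) / (x - 1)"
  proof -
    have "(x + 1)^2 * (x - 1) \<le> (x + 1) * x^2"
    proof -
      have "(x + 1) * x^2 - (x + 1)^2 * (x - 1) = x + 1"
        by (simp add: power2_eq_square algebra_simps)
      thus ?thesis using x by linarith
    qed
    thus ?thesis using x by (simp add: power_divide field_simps)
  qed
  have r_lower: "(x + 1) / x \<le> r" unfolding r_def using r_lower_sq x by (intro real_le_rsqrt) auto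
  have r_upper_sq: "(x + 1) / (x - 1) \<le> ((2 * x + 3) / (2 * x))^2"
  proof -
    have "4 * x^2 * (x + 1) \<le> (2 * x + 3)^2 * (x - 1)"
    proof -
      have "(2 * x + 3)^2 * (x - 1) - 4 * x^2 * (x + 1) = (x - 2) * (4 * x + 5) + 1"
        by (simp add: power2_eq_square algebra_simps)
      moreover have "(x - 2) * (4 * x + 5) \<ge> 0" using x by simp
      ultimately show ?thesis by linarith
    qed
    thus ?thesis using x by (simp add: power_divide field_simps)
  qed
  have r_upper: "r \<le> (2 * x + 3) / (2 * x)" unfolding r_def
    using real_sqrt_le_mono[OF r_upper_sq] x by simp
  have "x + 1 \<le> x * r" using r_lower x by (simp add: field_simps)
  moreover have "2 * (x * r) \<le> 2 * x + 3" using r_upper x by (simp add: field_simps)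
  moreover have "2 * beta2 m = 2 * x + 2 - 2 * (x * r)"
    unfolding beta2_def x_def[symmetric] r_def[symmetric] by (simp add: algebra_simps)
  ultimately have "\<bar>2 * beta2 m\<bar> \<le> 1" unfolding abs_le_iff by linarith
  hence "(2 * beta2 m)^2 \<le> 1" by (simp only: abs_square_le_1)
  thus ?thesis by (simp add: power_mult_distrib)
qed

definition spinor_endo ::
    "nat \<Rightarrow> nat \<Rightarrow> nat \<Rightarrow> complex mat \<Rightarrow> (int \<Rightarrow> complex mat) \<Rightarrow> complex mat \<Rightarrow> complex mat" where
  "spinor_endo m n N G P Q = (- \<i>) \<cdot>\<^sub>m G
           + of_nat ((m + 2) * (m - 1)) \<cdot>\<^sub>m P (int n - 1)
           + of_nat (m * (m + 1)) \<cdot>\<^sub>m P (int n)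
           + of_nat ((m + 1)^2) \<cdot>\<^sub>m Q
           - complex_of_real ((real m + 4) * (beta1 m)^2) \<cdot>\<^sub>m P (int n - 2)
           - complex_of_real ((real m + 2) * (beta2 m)^2) \<cdot>\<^sub>m P (int n + 1)
           - of_nat (m * (m + 1)) \<cdot>\<^sub>m 1\<^sub>m N"

definition spinor_endo_eigenvalue :: "nat \<Rightarrow> nat \<Rightarrow> int \<Rightarrow> real" where
  "spinor_endo_eigenvalue m n j = real_of_int (int m - 2 * j)
     + (if j = int n - 1 then (real m + 2) * (real m - 1) else 0)
     + (if j = int n then real m * (real m + 1) else 0)
     + (if j = int n - 1 \<or> j = int n then 0 else (real m + 1)^2)
     - (if j = int n - 2 then (real m + 4) * (beta1 m)^2 else 0)
     - (if j = int n + 1 then (real m + 2) * (beta2 m)^2 else 0)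
     - real m * (real m + 1)"

lemma spinor_endo_eigenvalue_nonneg:
  assumes "m = 2 * n" "n \<ge> 1" "0 \<le> j" "j \<le> int m"
  shows "0 \<le> spinor_endo_eigenvalue m n j"
proof -
  have m: "real m = 2 * real n" "real m \<ge> 2" using assms(1,2) by simp_all
  consider "j = int n - 1" | "j = int n" | "j = int n - 2" | "j = int n + 1"
    | "j \<noteq> int n - 1" "j \<noteq> int n" "j \<noteq> int n - 2" "j \<noteq> int n + 1" by blast
  then show ?thesis
  proof cases
    case 3
    then have "spinor_endo_eigenvalue m n j = real m + 5 - (real m + 4) * (beta1 m)^2"
      using m unfolding spinor_endo_eigenvalue_def by (simp add: power2_eq_square algebra_simps)
    moreover have "(real m + 4) * (beta1 m)^2 \<le> real m + 4"
      using beta1_sq_le[of m] m by (simp add: mult_left_le)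
    ultimately show ?thesis by linarith
  next
    case 4
    then have "spinor_endo_eigenvalue m n j = real m - 1 - (real m + 2) * (beta2 m)^2"
      using m unfolding spinor_endo_eigenvalue_def by (simp add: power2_eq_square algebra_simps)
    moreover have "(real m + 2) * (4 * (beta2 m)^2) \<le> real m + 2"
      using beta2_sq_le[of m] m by (simp add: mult_left_le)
    ultimately show ?thesis using m by (simp add: algebra_simps)
  qed (use m assms(3,4) in \<open>auto simp: spinor_endo_eigenvalue_def power2_eq_square algebra_simps\<close>)
qed

(* One fibre of S^cM: G is gamma(Omega), P j is pi_j and Q is pr_(V^perp), V = S_(n-1) + S_n. *)
locale spinor_fibre =
  fixes m n N :: nat and G :: "complex mat" and P :: "int \<Rightarrow> complex mat" and Q :: "complex mat"
  assumes hm: "m = 2 * n" and hn: "n \<ge> 1"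
    and hG: "G \<in> carrier_mat N N"
    and hGskew: "mat_adjoint G = - G"
    and hGspec: "\<forall>c. eigenvalue G c \<longrightarrow> (\<exists>j::int. 0 \<le> j \<and> j \<le> int m \<and> c = \<i> * of_int (int m - 2 * j))"
    and hP: "\<forall>j::int. 0 \<le> j \<and> j \<le> int m \<longrightarrow> is_orth_proj N (P j) (eigsp G (\<i> * of_int (int m - 2 * j)))"
    and hP0: "\<forall>j::int. \<not> (0 \<le> j \<and> j \<le> int m) \<longrightarrow> P j = 0\<^sub>m N N"
    and hQ: "is_orth_proj N Q (orth_compl N
              {x + y | x y. x \<in> eigsp G (\<i> * of_int (int m - 2 * (int n - 1)))
                          \<and> y \<in> eigsp G (\<i> * of_int (int m - 2 * int n))})"
begin

abbreviation ev :: "int \<Rightarrow> complex" where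
  "ev j \<equiv> \<i> * of_int (int m - 2 * j)"

sublocale skew_adjoint_eigenprojections N G "{0..int m}" ev P
proof
  show "inj_on ev {0..int m}" by (auto simp: inj_on_def)
  show "c \<in> ev ` {0..int m}" if "eigenvalue G c" for c
    using hGspec that by auto
qed (use hG hGskew hP in auto)

lemma P_carrier_all: "P i \<in> carrier_mat N N"
  using P_carrier hP0 by (cases "i \<in> {0..int m}") auto

lemma P_mult_eigvec_all:
  assumes j: "j \<in> {0..int m}" and u: "u \<in> eigsp G (ev j)"
  shows "P i *\<^sub>v u = (if i = j then u else 0\<^sub>v N)"
proof (cases "i \<in> {0..int m}")
  case False
  have "u \<in> carrier_vec N" using u eigsp_carrier[OF hG] by blast
  moreover have "P i = 0\<^sub>m N N" using hP0 False by auto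
  ultimately show ?thesis using False j by (auto intro!: eq_vecI)
qed (rule P_mult_eigvec[OF _ j u])

definition V :: "complex vec set" where
  "V = {x + y | x y. x \<in> eigsp G (ev (int n - 1)) \<and> y \<in> eigsp G (ev (int n))}"

lemma V_carrier: "V \<subseteq> carrier_vec N"
  unfolding V_def by (blast intro: add_carrier_vec dest: subsetD[OF eigsp_carrier[OF hG]])

lemma eigsp_subset_V:
  assumes "j = int n - 1 \<or> j = int n"
  shows "eigsp G (ev j) \<subseteq> V"
proof
  fix u assume u: "u \<in> eigsp G (ev j)"
  then have uN: "u \<in> carrier_vec N" using eigsp_carrier[OF hG] by blast
  show "u \<in> V"
  proof (cases "j = int n - 1")
    case True
    then show ?thesis
      unfolding V_def using u uN zero_in_eigsp[OF hG]
      by (intro CollectI exI[of _ u] exI[of _ "0\<^sub>v N"]) simp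
  next
    case False
    then show ?thesis
      unfolding V_def using assms u uN zero_in_eigsp[OF hG]
      by (intro CollectI exI[of _ "0\<^sub>v N"] exI[of _ u]) simp
  qed
qed

lemma eigsp_orth_V:
  assumes "j \<noteq> int n - 1" "j \<noteq> int n"
  shows "eigsp G (ev j) \<subseteq> orth_compl N V"
proof (unfold orth_compl_def, intro subsetI CollectI conjI ballI)
  fix u assume u: "u \<in> eigsp G (ev j)"
  then show uN: "u \<in> carrier_vec N" using eigsp_carrier[OF hG] by blast
  fix z assume "z \<in> V"
  then obtain x y where z: "z = x + y"
    and x: "x \<in> eigsp G (ev (int n - 1))" and y: "y \<in> eigsp G (ev (int n))"
    unfolding V_def by blast
  have xN: "x \<in> carrier_vec N" and yN: "y \<in> carrier_vec N"
    using x y eigsp_carrier[OF hG] by blast+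
  have "u \<in> orth_compl N (eigsp G (ev i))" if "i = int n - 1 \<or> i = int n" for i
    using skew_adjoint_eigsp_orth[OF hG hGskew, of "ev j" "ev i"] u assms that by auto
  then have "u \<bullet>c x = 0" "u \<bullet>c y = 0"
    using x y unfolding orth_compl_def by blast+
  then show "u \<bullet>c z = 0"
    using uN xN yN unfolding z by (simp add: conjugate_add_vec scalar_prod_add_distrib[of _ N])
qed

lemma Q_mult_eigvec:
  assumes u: "u \<in> eigsp G (ev j)"
  shows "Q *\<^sub>v u = (if j = int n - 1 \<or> j = int n then 0\<^sub>v N else u)"
proof (cases "j = int n - 1 \<or> j = int n")
  case True
  then have "u \<in> orth_compl N (orth_compl N V)"
    using eigsp_subset_V subset_orth_compl_orth_compl[OF V_carrier] u by blast
  then show ?thesis using is_orth_proj_orth_compl[OF hQ[folded V_def]] True by simp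
next
  case False
  then have "u \<in> orth_compl N V" using eigsp_orth_V u by blast
  then show ?thesis using is_orth_proj_fixes[OF hQ[folded V_def]] False by simp
qed

lemma spinor_endo_mult_eigvec:
  assumes j: "j \<in> {0..int m}" and u: "u \<in> eigsp G (ev j)"
  shows "spinor_endo m n N G P Q *\<^sub>v u = complex_of_real (spinor_endo_eigenvalue m n j) \<cdot>\<^sub>v u"
proof -
  have uN: "u \<in> carrier_vec N" and Gu: "G *\<^sub>v u = ev j \<cdot>\<^sub>v u"
    using u hG unfolding eigsp_def by auto
  have "spinor_endo m n N G P Q *\<^sub>v u = (- \<i>) \<cdot>\<^sub>v (G *\<^sub>v u)
           + of_nat ((m + 2) * (m - 1)) \<cdot>\<^sub>v (P (int n - 1) *\<^sub>v u)
           + of_nat (m * (m + 1)) \<cdot>\<^sub>v (P (int n) *\<^sub>v u)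
           + of_nat ((m + 1)^2) \<cdot>\<^sub>v (Q *\<^sub>v u)
           - complex_of_real ((real m + 4) * (beta1 m)^2) \<cdot>\<^sub>v (P (int n - 2) *\<^sub>v u)
           - complex_of_real ((real m + 2) * (beta2 m)^2) \<cdot>\<^sub>v (P (int n + 1) *\<^sub>v u)
           - of_nat (m * (m + 1)) \<cdot>\<^sub>v u"
    unfolding spinor_endo_def using hG P_carrier_all is_orth_proj_carrier[OF hQ] uN
    by (simp add: add_mult_distrib_mat_vec[of _ N N] minus_mult_distrib_mat_vec[of _ N N]
        smult_mat_mult_vec[of _ N N] add_carrier_mat minus_carrier_mat)
  also have "\<dots> = complex_of_real (spinor_endo_eigenvalue m n j) \<cdot>\<^sub>v u"
    unfolding Gu P_mult_eigvec_all[OF j u] Q_mult_eigvec[OF u]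
    using uN hn hm
    by (intro eq_vecI) (auto simp: spinor_endo_eigenvalue_def of_nat_diff algebra_simps)
  finally show ?thesis .
qed

lemma spinor_endo_conj_sprod_nonneg:
  assumes "\<psi> \<in> carrier_vec N"
  shows "0 \<le> (spinor_endo m n N G P Q *\<^sub>v \<psi>) \<bullet>c \<psi>"
proof (rule conj_sprod_nonneg[OF _ spinor_endo_mult_eigvec _ assms])
  show "spinor_endo m n N G P Q \<in> carrier_mat N N"
    unfolding spinor_endo_def using hG P_carrier_all is_orth_proj_carrier[OF hQ]
    by (simp add: add_carrier_mat minus_carrier_mat)
  show "0 \<le> complex_of_real (spinor_endo_eigenvalue m n j)" if "j \<in> {0..int m}" for j
    using spinor_endo_eigenvalue_nonneg[OF hm hn] that by (simp add: less_eq_complex_def)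
qed

end

theorem mainTheorem7:
  fixes m n N :: nat and G :: "complex mat" and P :: "int \<Rightarrow> complex mat" and Q :: "complex mat"
  assumes hm: "m = 2 * n" and hn: "n \<ge> 1"
    and hG: "G \<in> carrier_mat N N"
    and hGskew: "mat_adjoint G = - G"
    and hGspec: "\<forall>c. eigenvalue G c \<longrightarrow> (\<exists>j::int. 0 \<le> j \<and> j \<le> int m \<and> c = \<i> * of_int (int m - 2 * j))"
    and hP: "\<forall>j::int. 0 \<le> j \<and> j \<le> int m \<longrightarrow> is_orth_proj N (P j) (eigsp G (\<i> * of_int (int m - 2 * j)))"
    and hP0: "\<forall>j::int. \<not> (0 \<le> j \<and> j \<le> int m) \<longrightarrow> P j = 0\<^sub>m N N"
    and hQ: "is_orth_proj N Q (orth_compl N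
              {x + y | x y. x \<in> eigsp G (\<i> * of_int (int m - 2 * (int n - 1)))
                          \<and> y \<in> eigsp G (\<i> * of_int (int m - 2 * int n))})"
  shows "\<forall>\<psi> \<in> carrier_vec N.
    (let T = (- \<i>) \<cdot>\<^sub>m G
           + of_nat ((m + 2) * (m - 1)) \<cdot>\<^sub>m P (int n - 1)
           + of_nat (m * (m + 1)) \<cdot>\<^sub>m P (int n)
           + of_nat ((m + 1)^2) \<cdot>\<^sub>m Q
           - complex_of_real ((real m + 4) * (beta1 m)^2) \<cdot>\<^sub>m P (int n - 2)
           - complex_of_real ((real m + 2) * (beta2 m)^2) \<cdot>\<^sub>m P (int n + 1)
           - of_nat (m * (m + 1)) \<cdot>\<^sub>m 1\<^sub>m N
     in Im ((T *\<^sub>v \<psi>) \<bullet>c \<psi>) = 0 \<and> Re ((T *\<^sub>v \<psi>) \<bullet>c \<psi>) \<ge> 0)"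
proof -
  interpret spinor_fibre m n N G P Q
    using assms by unfold_locales
  show ?thesis
    unfolding Let_def spinor_endo_def[symmetric]
    using spinor_endo_conj_sprod_nonneg by (simp add: less_eq_complex_def)
qed

end
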